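(* In the setting of the Adapted Realisation theorem in the exceptional case $F_n=A_1*A_2$ with $A_1,A_2$ non-trivial (so that $\widetilde\iota_1(\widetilde X_1)\cap\widetilde\iota_2(\widetilde X_2)$ is a single point), the projection of this intersection point to $X$ is fixed by the action of $H$ on $X$.
   Context: Setting: $H$ finite, $\phi\colon H\to\mathrm{Out}(F_n)$, $F_n=A_1*A_2$ with $\phi(H)$ preserving the conjugacy classes of $A_1$ and $A_2$; $X_i$ are marked metric graphs realising the induced actions $H\to\mathrm{Out}(A_i)$; $X$ is a marked metric graph on which $H$ acts by combinatorial isometries realising $\phi$, with $H$-invariant isometric embeddings $\iota_i\colon X_i\to X$ respecting markings via lifts $\widetilde\iota_i\colon\widetilde X_i\to\widetilde X$ (equivariant for $A_i\hookrightarrow F_n$), $X=\iota_1(X_1)\cup\iota_2(X_2)$, and $\widetilde\iota_1(\widetilde X_1)\cap\widetilde\iota_2(\widetilde X_2)$ a single point. A space is marked by a group $A$ if an isomorphism of $A$ with the deck group of its universal cover is fixed; realising means the induced action on conjugacy classes of $\pi_1$ agrees with the given outer action. *)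

theory Defs
  imports "HOL-Algebra.Algebra"
begin

definition word_val :: "('g, 'b) monoid_scheme \<Rightarrow> ('g \<times> bool) list \<Rightarrow> 'g" where
  "word_val G ws = foldr (\<lambda>(b, s) acc. (if s then b else inv\<^bsub>G\<^esub> b) \<otimes>\<^bsub>G\<^esub> acc) ws \<one>\<^bsub>G\<^esub>"

definition reduced_word :: "('g \<times> bool) list \<Rightarrow> bool" where
  "reduced_word ws \<longleftrightarrow>
     (\<forall>i. Suc i < length ws \<longrightarrow> \<not> (fst (ws ! i) = fst (ws ! Suc i) \<and> snd (ws ! i) \<noteq> snd (ws ! Suc i)))"

definition free_of_rank :: "('g, 'b) monoid_scheme \<Rightarrow> nat \<Rightarrow> bool" where
  "free_of_rank G n \<longleftrightarrow> group G \<and>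
     (\<exists>B. B \<subseteq> carrier G \<and> finite B \<and> card B = n \<and> generate G B = carrier G \<and>
        (\<forall>ws. ws \<noteq> [] \<and> fst ` set ws \<subseteq> B \<and> reduced_word ws \<longrightarrow> word_val G ws \<noteq> \<one>\<^bsub>G\<^esub>))"

definition internal_free_product :: "('g, 'b) monoid_scheme \<Rightarrow> 'g set \<Rightarrow> 'g set \<Rightarrow> bool" where
  "internal_free_product G A B \<longleftrightarrow> group G \<and> subgroup A G \<and> subgroup B G \<and>
     generate G (A \<union> B) = carrier G \<and>
     (\<forall>ws c. ws \<noteq> [] \<and> (\<forall>i < length ws. ws ! i \<in> (if even i = c then A else B) - {\<one>\<^bsub>G\<^esub>})
        \<longrightarrow> foldr (\<otimes>\<^bsub>G\<^esub>) ws \<one>\<^bsub>G\<^esub> \<noteq> \<one>\<^bsub>G\<^esub>)"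

text \<open>Outer automorphism classes, represented as cosets of Inn(K) in Aut(K).\<close>
definition out_class :: "('g, 'b) monoid_scheme \<Rightarrow> ('g \<Rightarrow> 'g) \<Rightarrow> ('g \<Rightarrow> 'g) set" where
  "out_class K \<alpha> = {\<beta> \<in> iso K K. \<exists>c \<in> carrier K. \<forall>x \<in> carrier K.
       \<beta> x = c \<otimes>\<^bsub>K\<^esub> \<alpha> x \<otimes>\<^bsub>K\<^esub> inv\<^bsub>K\<^esub> c}"

definition Out_group :: "('g, 'b) monoid_scheme \<Rightarrow> ('g \<Rightarrow> 'g) set monoid" where
  "Out_group K = \<lparr> carrier = {out_class K \<alpha> | \<alpha>. \<alpha> \<in> iso K K},
     monoid.mult = (\<lambda>P Q. {\<beta> \<in> iso K K. \<exists>\<alpha> \<in> P. \<exists>\<alpha>' \<in> Q. \<forall>x \<in> carrier K. \<beta> x = \<alpha> (\<alpha>' x)}),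
     one = out_class K (\<lambda>x. x) \<rparr>"

text \<open>Induced outer action on a subgroup A whose conjugacy class is preserved:
  restrict a representative automorphism mapping A onto A.\<close>
definition induced_out :: "('g, 'b) monoid_scheme \<Rightarrow> 'g set \<Rightarrow> ('h \<Rightarrow> ('g \<Rightarrow> 'g) set) \<Rightarrow> 'h \<Rightarrow> ('g \<Rightarrow> 'g) set" where
  "induced_out G A \<phi> h = (\<Union>\<alpha> \<in> {\<alpha> \<in> \<phi> h. \<alpha> ` A = A}. out_class (G\<lparr>carrier := A\<rparr>) \<alpha>)"

definition metric_on :: "'p set \<Rightarrow> ('p \<Rightarrow> 'p \<Rightarrow> real) \<Rightarrow> bool" where
  "metric_on T d \<longleftrightarrow>
     (\<forall>x\<in>T. \<forall>y\<in>T. 0 \<le> d x y \<and> (d x y = 0 \<longleftrightarrow> x = y) \<and> d x y = d y x) \<and>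
     (\<forall>x\<in>T. \<forall>y\<in>T. \<forall>z\<in>T. d x z \<le> d x y + d y z)"

definition isometric_embedding :: "'a set \<Rightarrow> ('a \<Rightarrow> 'a \<Rightarrow> real) \<Rightarrow> 'p set \<Rightarrow> ('p \<Rightarrow> 'p \<Rightarrow> real) \<Rightarrow> ('a \<Rightarrow> 'p) \<Rightarrow> bool" where
  "isometric_embedding S e T d f \<longleftrightarrow> f ` S \<subseteq> T \<and> (\<forall>x\<in>S. \<forall>y\<in>S. d (f x) (f y) = e x y)"

definition geodesic_space :: "'p set \<Rightarrow> ('p \<Rightarrow> 'p \<Rightarrow> real) \<Rightarrow> bool" where
  "geodesic_space T d \<longleftrightarrow> (\<forall>x\<in>T. \<forall>y\<in>T. \<exists>\<gamma>.
      isometric_embedding {0..d x y} (\<lambda>s t. \<bar>s - t\<bar>) T d \<gamma> \<and> \<gamma> 0 = x \<and> \<gamma> (d x y) = y)"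

definition gromov_product :: "('p \<Rightarrow> 'p \<Rightarrow> real) \<Rightarrow> 'p \<Rightarrow> 'p \<Rightarrow> 'p \<Rightarrow> real" where
  "gromov_product d w x y = (d w x + d w y - d x y) / 2"

definition zero_hyperbolic :: "'p set \<Rightarrow> ('p \<Rightarrow> 'p \<Rightarrow> real) \<Rightarrow> bool" where
  "zero_hyperbolic T d \<longleftrightarrow> (\<forall>w\<in>T. \<forall>x\<in>T. \<forall>y\<in>T. \<forall>z\<in>T.
      min (gromov_product d w x y) (gromov_product d w y z) \<le> gromov_product d w x z)"

definition R_tree :: "'p set \<Rightarrow> ('p \<Rightarrow> 'p \<Rightarrow> real) \<Rightarrow> bool" where
  "R_tree T d \<longleftrightarrow> T \<noteq> {} \<and> metric_on T d \<and> geodesic_space T d \<and> zero_hyperbolic T d"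

definition seg :: "'p set \<Rightarrow> ('p \<Rightarrow> 'p \<Rightarrow> real) \<Rightarrow> 'p \<Rightarrow> 'p \<Rightarrow> 'p set" where
  "seg T d x y = {z \<in> T. d x z + d z y = d x y}"

definition adjacent :: "'p set \<Rightarrow> ('p \<Rightarrow> 'p \<Rightarrow> real) \<Rightarrow> 'p set \<Rightarrow> 'p \<Rightarrow> 'p \<Rightarrow> bool" where
  "adjacent T d V u v \<longleftrightarrow> u \<in> V \<and> v \<in> V \<and> u \<noteq> v \<and> seg T d u v \<inter> V = {u, v}"

text \<open>Metric simplicial tree: an R-tree with a discrete vertex set V such that every
  non-vertex point lies in the interior of an edge [u,v] (a segment between adjacent vertices)
  through which it is connected to the rest of the tree only via u or v.\<close>
definition simplicial_tree :: "'p set \<Rightarrow> ('p \<Rightarrow> 'p \<Rightarrow> real) \<Rightarrow> 'p set \<Rightarrow> bool" where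
  "simplicial_tree T d V \<longleftrightarrow> R_tree T d \<and> V \<subseteq> T \<and> V \<noteq> {} \<and>
     (\<forall>v\<in>V. \<exists>\<epsilon>>0. \<forall>w\<in>V. d v w < \<epsilon> \<longrightarrow> w = v) \<and>
     (\<forall>x \<in> T - V. \<exists>u v. adjacent T d V u v \<and> x \<in> seg T d u v \<and>
        (\<forall>z\<in>T. z \<in> seg T d u v \<or> u \<in> seg T d x z \<or> v \<in> seg T d x z))"

definition orb :: "('g, 'b) monoid_scheme \<Rightarrow> ('g \<Rightarrow> 'p \<Rightarrow> 'p) \<Rightarrow> 'p \<Rightarrow> 'p set" where
  "orb K \<rho> x = {\<rho> g x | g. g \<in> carrier K}"

definition left_action :: "('g, 'b) monoid_scheme \<Rightarrow> 'p set \<Rightarrow> ('g \<Rightarrow> 'p \<Rightarrow> 'p) \<Rightarrow> bool" where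
  "left_action K S \<rho> \<longleftrightarrow>
     (\<forall>g\<in>carrier K. \<forall>x\<in>S. \<rho> g x \<in> S) \<and> (\<forall>x\<in>S. \<rho> \<one>\<^bsub>K\<^esub> x = x) \<and>
     (\<forall>g\<in>carrier K. \<forall>h\<in>carrier K. \<forall>x\<in>S. \<rho> (g \<otimes>\<^bsub>K\<^esub> h) x = \<rho> g (\<rho> h x))"

text \<open>A marked metric graph X, marked by the group K, is represented by its universal cover T
  (a metric simplicial tree with vertex set V) together with the deck action \<rho> of K
  (free, by simplicial isometries, with finite quotient graph X = T/K).\<close>
definition marked_metric_graph ::
  "('g, 'b) monoid_scheme \<Rightarrow> 'p set \<Rightarrow> ('p \<Rightarrow> 'p \<Rightarrow> real) \<Rightarrow> 'p set \<Rightarrow> ('g \<Rightarrow> 'p \<Rightarrow> 'p) \<Rightarrow> bool" where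
  "marked_metric_graph K T d V \<rho> \<longleftrightarrow> group K \<and> simplicial_tree T d V \<and> left_action K T \<rho> \<and>
     (\<forall>g\<in>carrier K. \<forall>x\<in>T. \<forall>y\<in>T. d (\<rho> g x) (\<rho> g y) = d x y) \<and>
     (\<forall>g\<in>carrier K. \<rho> g ` V \<subseteq> V) \<and>
     (\<forall>g\<in>carrier K. \<forall>x\<in>T. \<rho> g x = x \<longrightarrow> g = \<one>\<^bsub>K\<^esub>) \<and>
     finite (orb K \<rho> ` V) \<and>
     finite ((\<lambda>(u, v). {(\<rho> g u, \<rho> g v) | g. g \<in> carrier K}) ` {(u, v). adjacent T d V u v})"

text \<open>Metric on the quotient graph X = T/K.\<close>
definition qdist :: "('p \<Rightarrow> 'p \<Rightarrow> real) \<Rightarrow> 'p set \<Rightarrow> 'p set \<Rightarrow> real" where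
  "qdist d P Q = Inf {d x y | x y. x \<in> P \<and> y \<in> Q}"

text \<open>H acts on X = T/K by isometries realising the outer action \<Psi> : H \<rightarrow> Out(K):
  every h admits a lift to T that is twisted-equivariant w.r.t. an automorphism in \<Psi> h.\<close>
definition realises ::
  "('g, 'b) monoid_scheme \<Rightarrow> 'p set \<Rightarrow> ('p \<Rightarrow> 'p \<Rightarrow> real) \<Rightarrow> ('g \<Rightarrow> 'p \<Rightarrow> 'p)
    \<Rightarrow> ('h, 'c) monoid_scheme \<Rightarrow> ('h \<Rightarrow> ('g \<Rightarrow> 'g) set) \<Rightarrow> ('h \<Rightarrow> 'p set \<Rightarrow> 'p set) \<Rightarrow> bool" where
  "realises K T d \<rho> H \<Psi> \<sigma> \<longleftrightarrow>
     left_action H (orb K \<rho> ` T) \<sigma> \<and>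
     (\<forall>h\<in>carrier H. \<forall>P \<in> orb K \<rho> ` T. \<forall>Q \<in> orb K \<rho> ` T. qdist d (\<sigma> h P) (\<sigma> h Q) = qdist d P Q) \<and>
     (\<forall>h\<in>carrier H. \<exists>f \<alpha>. \<alpha> \<in> \<Psi> h \<and>
        (\<forall>x\<in>T. f x \<in> T \<and> orb K \<rho> (f x) = \<sigma> h (orb K \<rho> x)) \<and>
        (\<forall>g\<in>carrier K. \<forall>x\<in>T. f (\<rho> g x) = \<rho> (\<alpha> g) (f x)))"

end

theory Submission
  imports Defs
begin

text \<open>Let \<open>S\<^sub>i\<close> be the image of the universal cover of \<open>X\<^sub>i\<close> in that of \<open>X\<close>, so that
  \<open>S\<^sub>1 \<inter> S\<^sub>2 = {p}\<close>. As the embeddings \<open>X\<^sub>i \<rightarrow> X\<close> are \<open>H\<close>-equivariant, for \<open>h \<in> H\<close> the point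
  \<open>h\<cdot>[p]\<close> of \<open>X\<close> is the image both of some \<open>x \<in> S\<^sub>1\<close> and of some \<open>y \<in> S\<^sub>2\<close>, so \<open>x = g\<cdot>y\<close>
  with \<open>g \<in> F\<^sub>n\<close>. Write \<open>g\<close> as an alternating product of letters from \<open>A\<^sub>1\<close> and \<open>A\<^sub>2\<close>.
  Letters of \<open>A\<^sub>1\<close> on the left and of \<open>A\<^sub>2\<close> on the right are absorbed by moving \<open>x\<close> inside
  \<open>S\<^sub>1\<close> and \<open>y\<close> inside \<open>S\<^sub>2\<close>. If letters remain, the translates of \<open>S\<^sub>1\<close> and \<open>S\<^sub>2\<close> along
  the word form a chain in the tree, consecutive ones meeting in a single translate of \<open>p\<close>;
  a geodesic from \<open>x \<noteq> p\<close> passes through these points in turn and can never come back to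
  \<open>x \<in> g\<cdot>S\<^sub>2\<close>. Hence \<open>x\<close> is a translate of \<open>p\<close>, and \<open>h\<close> fixes \<open>[p]\<close>.\<close>

section \<open>Segments in R-trees\<close>

lemma metric_on_dist_commute: "metric_on T d \<Longrightarrow> x \<in> T \<Longrightarrow> y \<in> T \<Longrightarrow> d x y = d y x"
  unfolding metric_on_def by blast

lemma metric_on_dist_nonneg: "metric_on T d \<Longrightarrow> x \<in> T \<Longrightarrow> y \<in> T \<Longrightarrow> 0 \<le> d x y"
  unfolding metric_on_def by blast

lemma metric_on_dist_eq_0_iff: "metric_on T d \<Longrightarrow> x \<in> T \<Longrightarrow> y \<in> T \<Longrightarrow> d x y = 0 \<longleftrightarrow> x = y"
  unfolding metric_on_def by blast

lemma metric_on_triangle: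
  "metric_on T d \<Longrightarrow> x \<in> T \<Longrightarrow> y \<in> T \<Longrightarrow> z \<in> T \<Longrightarrow> d x z \<le> d x y + d y z"
  unfolding metric_on_def by blast

lemma seg_same_endpoints:
  assumes M: "metric_on T d" and x: "x \<in> T"
  shows "seg T d x x = {x}"
proof -
  have "d x z = 0" if "z \<in> T" "d x z + d z x = d x x" for z
    using that metric_on_dist_nonneg[OF M x] metric_on_dist_nonneg[OF M _ x]
      metric_on_dist_eq_0_iff[OF M x x] by force
  then show ?thesis
    using metric_on_dist_eq_0_iff[OF M x] x unfolding seg_def by auto
qed

lemma left_endpoint_mem_seg: "metric_on T d \<Longrightarrow> x \<in> T \<Longrightarrow> y \<in> T \<Longrightarrow> x \<in> seg T d x y"
  using metric_on_dist_eq_0_iff unfolding seg_def by fastforce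

lemma zero_hyperbolicD:
  assumes "zero_hyperbolic T d" "w \<in> T" "x \<in> T" "y \<in> T" "z \<in> T"
  shows "min (d w x + d w y - d x y) (d w y + d w z - d y z) \<le> d w x + d w z - d x z"
proof -
  have "min (gromov_product d w x y) (gromov_product d w y z) \<le> gromov_product d w x z"
    using assms unfolding zero_hyperbolic_def by blast
  then show ?thesis
    unfolding gromov_product_def min_def by (auto split: if_splits)
qed

lemma geodesic_space_point_at_distance:
  assumes "geodesic_space T d" "x \<in> T" "y \<in> T" "0 \<le> t" "t \<le> d x y"
  obtains z where "z \<in> T" "d x z = t" "d z y = d x y - t"
proof -
  obtain \<gamma> where \<gamma>: "isometric_embedding {0..d x y} (\<lambda>s t. \<bar>s - t\<bar>) T d \<gamma>"
    "\<gamma> 0 = x" "\<gamma> (d x y) = y"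
    using assms unfolding geodesic_space_def by blast
  have ends: "0 \<in> {0..d x y}" "t \<in> {0..d x y}" "d x y \<in> {0..d x y}"
    using assms(4,5) by auto
  with \<gamma> have "\<gamma> t \<in> T" "d x (\<gamma> t) = \<bar>0 - t\<bar>" "d (\<gamma> t) y = \<bar>t - d x y\<bar>"
    unfolding isometric_embedding_def by (force, metis, metis)
  then show thesis
    using that assms(4,5) by simp
qed

lemma seg_point_unique:
  assumes M: "metric_on T d" and Z: "zero_hyperbolic T d" and "u \<in> T" "v \<in> T"
    and z: "z \<in> seg T d u v" and w: "w \<in> seg T d u v" and "d u z = d u w"
  shows "z = w"
proof -
  have zw: "z \<in> T" "w \<in> T" "d u z + d z v = d u v" "d u w + d w v = d u v"
    using z w unfolding seg_def by auto
  have "min (d u z + d u v - d z v) (d u v + d u w - d v w) \<le> d u z + d u w - d z w"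
    using zero_hyperbolicD[OF Z \<open>u \<in> T\<close> zw(1) \<open>v \<in> T\<close> zw(2)] .
  then have "d z w \<le> 0"
    using zw assms(7) metric_on_dist_commute[OF M \<open>v \<in> T\<close> zw(2)] by linarith
  then show ?thesis
    using metric_on_dist_nonneg[OF M zw(1,2)] metric_on_dist_eq_0_iff[OF M zw(1,2)] by simp
qed

text \<open>The points at distance \<open>(x|z)\<^sub>y\<close> from \<open>y\<close> on geodesics towards \<open>x\<close> and towards
  \<open>z\<close> coincide by 0-hyperbolicity, so lie in both segments; hence that Gromov product is 0.\<close>
lemma mem_seg_if_segs_meet_only_at:
  assumes R: "R_tree T d" and "x \<in> T" "y \<in> T" "z \<in> T"
    and meet: "seg T d y x \<inter> seg T d y z \<subseteq> {y}"
  shows "y \<in> seg T d x z"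
proof -
  have M: "metric_on T d" and Ge: "geodesic_space T d" and Z: "zero_hyperbolic T d"
    using R unfolding R_tree_def by auto
  note dist_commute = metric_on_dist_commute[OF M] and triangle = metric_on_triangle[OF M]
  define t where "t = (d y x + d y z - d x z) / 2"
  have t: "0 \<le> t" "t \<le> d y x" "t \<le> d y z"
    using triangle[of x y z] triangle[of y x z] triangle[of y z x] dist_commute[of x y]
      dist_commute[of x z] assms(2-4) unfolding t_def by auto
  obtain x' where x': "x' \<in> T" "d y x' = t" "d x' x = d y x - t"
    using geodesic_space_point_at_distance[OF Ge \<open>y \<in> T\<close> \<open>x \<in> T\<close> t(1,2)] .
  obtain z' where z': "z' \<in> T" "d y z' = t" "d z' z = d y z - t"
    using geodesic_space_point_at_distance[OF Ge \<open>y \<in> T\<close> \<open>z \<in> T\<close> t(1,3)] .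
  have "min (d y x' + d y x - d x' x) (d y x + d y z - d x z) \<le> d y x' + d y z - d x' z"
    using zero_hyperbolicD[OF Z \<open>y \<in> T\<close> x'(1) \<open>x \<in> T\<close> \<open>z \<in> T\<close>] .
  moreover have "d y x' + d y x - d x' x = 2 * t" "d y x + d y z - d x z = 2 * t"
    using x' unfolding t_def by (simp_all add: field_simps)
  ultimately have x'z: "2 * t \<le> d y x' + d y z - d x' z"
    by simp
  have "min (d y x' + d y z - d x' z) (d y z + d y z' - d z z') \<le> d y x' + d y z' - d x' z'"
    using zero_hyperbolicD[OF Z \<open>y \<in> T\<close> x'(1) \<open>z \<in> T\<close> z'(1)] .
  then have "d x' z' \<le> 0"
    using x'z x'(2) z' dist_commute[OF z'(1) \<open>z \<in> T\<close>] unfolding min_def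
    by (auto split: if_splits)
  then have "x' = z'"
    using metric_on_dist_nonneg[OF M x'(1) z'(1)] metric_on_dist_eq_0_iff[OF M x'(1) z'(1)] by simp
  then have "x' \<in> seg T d y x \<inter> seg T d y z"
    using x' z' unfolding seg_def by simp
  then have "t = 0"
    using meet x'(2) metric_on_dist_eq_0_iff[OF M \<open>y \<in> T\<close> \<open>y \<in> T\<close>] by auto
  then show ?thesis
    using assms(2-4) dist_commute[of x y] unfolding t_def seg_def by simp
qed

lemma mem_seg_concat:
  assumes M: "metric_on T d" and Z: "zero_hyperbolic T d" and "x \<in> T" "v \<in> T"
    and u: "u \<in> seg T d x w" and w: "w \<in> seg T d u v" and "u \<noteq> w"
  shows "w \<in> seg T d x v"
proof -
  have uw: "u \<in> T" "w \<in> T" "d x u + d u w = d x w" "d u w + d w v = d u v"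
    using u w unfolding seg_def by auto
  note dist_commute = metric_on_dist_commute[OF M]
  have "min (d w u + d w x - d u x) (d w x + d w v - d x v) \<le> d w u + d w v - d u v"
    using zero_hyperbolicD[OF Z uw(2,1) \<open>x \<in> T\<close> \<open>v \<in> T\<close>] .
  moreover have "0 < d w u"
    using metric_on_dist_nonneg[OF M uw(2,1)] metric_on_dist_eq_0_iff[OF M uw(2,1)] \<open>u \<noteq> w\<close>
    by force
  ultimately have "d w x + d w v - d x v \<le> 0"
    using uw dist_commute[OF uw(2,1)] dist_commute[OF uw(1) \<open>x \<in> T\<close>]
      dist_commute[OF uw(2) \<open>x \<in> T\<close>] by linarith
  then show ?thesis
    using metric_on_triangle[OF M \<open>x \<in> T\<close> uw(2) \<open>v \<in> T\<close>] dist_commute[OF uw(2) \<open>x \<in> T\<close>] uw(2)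
    unfolding seg_def by simp
qed

lemma isometric_image_seg_subset:
  assumes M: "metric_on T d" and Z: "zero_hyperbolic T d" and Ge: "geodesic_space T' d'"
    and f: "isometric_embedding T' d' T d f" and "u \<in> f ` T'" "v \<in> f ` T'"
  shows "seg T d u v \<subseteq> f ` T'"
proof
  fix z assume z: "z \<in> seg T d u v"
  obtain a b where ab: "a \<in> T'" "b \<in> T'" "u = f a" "v = f b"
    using assms(5,6) by blast
  have fT: "f ` T' \<subseteq> T" and fd: "\<And>x y. x \<in> T' \<Longrightarrow> y \<in> T' \<Longrightarrow> d (f x) (f y) = d' x y"
    using f unfolding isometric_embedding_def by auto
  have uv: "u \<in> T" "v \<in> T"
    using ab fT by auto
  have "0 \<le> d u z" "d u z \<le> d' a b"
    using z metric_on_dist_nonneg[OF M] uv fd[OF ab(1,2)] ab unfolding seg_def by force+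
  then obtain c where c: "c \<in> T'" "d' a c = d u z" "d' c b = d' a b - d u z"
    using geodesic_space_point_at_distance[OF Ge ab(1,2)] by blast
  have "f c \<in> seg T d u v"
    using c fT fd ab unfolding seg_def by auto
  then have "z = f c"
    using seg_point_unique[OF M Z uv z] c(1,2) fd ab by simp
  then show "z \<in> f ` T'"
    using c(1) by blast
qed

section \<open>Alternating words in a group generated by two subgroups\<close>

locale subgroup_pair = group G for G (structure) +
  fixes A1 A2 :: "'a set"
  assumes subgroup_A1: "subgroup A1 G" and subgroup_A2: "subgroup A2 G"
    and generate_A1_A2: "generate G (A1 \<union> A2) = carrier G"
begin

definition factor :: "bool \<Rightarrow> 'a set" where
  "factor c = (if c then A1 else A2)"

definition alternating :: "('a \<times> bool) list \<Rightarrow> bool" where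
  "alternating ws \<longleftrightarrow>
     (\<forall>(l, c) \<in> set ws. l \<in> factor c \<and> l \<noteq> \<one>) \<and> successively (\<lambda>a b. snd a \<noteq> snd b) ws"

definition word_prod :: "('a \<times> bool) list \<Rightarrow> 'a" where
  "word_prod ws = foldr (\<otimes>) (map fst ws) \<one>"

lemma subgroup_factor: "subgroup (factor c) G"
  using subgroup_A1 subgroup_A2 unfolding factor_def by simp

lemma factor_carrier: "l \<in> factor c \<Longrightarrow> l \<in> carrier G"
  using subgroup.subset[OF subgroup_factor] by blast

lemma alternating_Nil [simp]: "alternating []"
  unfolding alternating_def by simp

lemma alternating_Cons [simp]:
  "alternating ((l, c) # ws) \<longleftrightarrow>
     l \<in> factor c \<and> l \<noteq> \<one> \<and> (ws = [] \<or> snd (hd ws) \<noteq> c) \<and> alternating ws"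
  unfolding alternating_def successively_Cons by auto

lemma alternating_append [simp]:
  "alternating (ws @ vs) \<longleftrightarrow>
     alternating ws \<and> alternating vs \<and> (ws = [] \<or> vs = [] \<or> snd (last ws) \<noteq> snd (hd vs))"
  unfolding alternating_def successively_append_iff by auto

lemma word_prod_Nil [simp]: "word_prod [] = \<one>"
  unfolding word_prod_def by simp

lemma word_prod_Cons [simp]: "word_prod ((l, c) # ws) = l \<otimes> word_prod ws"
  unfolding word_prod_def by simp

lemma word_prod_closed: "alternating ws \<Longrightarrow> word_prod ws \<in> carrier G"
  by (induction ws) (auto simp: factor_carrier)

lemma word_prod_snoc:
  "alternating (ws @ [(l, c)]) \<Longrightarrow> word_prod (ws @ [(l, c)]) = word_prod ws \<otimes> l"
  by (induction ws) (auto simp: factor_carrier word_prod_closed m_assoc)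

lemma alternating_mult_letter:
  assumes l: "l \<in> factor c" and ws: "alternating ws"
  obtains vs where "alternating vs" "l \<otimes> word_prod ws = word_prod vs"
proof (cases "l = \<one> \<or> ws = [] \<or> snd (hd ws) \<noteq> c")
  case True
  then show thesis
    using that[of ws] that[of "(l, c) # ws"] l ws word_prod_closed by fastforce
next
  case False
  then obtain l' ws' where ws_eq: "ws = (l', c) # ws'"
    by (cases ws) auto
  have l': "l' \<in> carrier G" "l \<in> carrier G" "word_prod ws' \<in> carrier G"
    using ws l ws_eq factor_carrier word_prod_closed by auto
  have prod: "l \<otimes> word_prod ws = (l \<otimes> l') \<otimes> word_prod ws'"
    using ws_eq l' by (simp add: m_assoc)
  have "l \<otimes> l' \<in> factor c"
    using subgroup.m_closed[OF subgroup_factor l] ws ws_eq by simp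
  then show thesis
    using that[of ws'] that[of "(l \<otimes> l', c) # ws'"] ws ws_eq prod l' by fastforce
qed

lemma alternating_words_mult_closed:
  assumes "alternating ws" "alternating vs"
  obtains us where "alternating us" "word_prod ws \<otimes> word_prod vs = word_prod us"
  using assms
proof (induction ws arbitrary: thesis)
  case Nil
  then show ?case
    using word_prod_closed by auto
next
  case (Cons w ws)
  obtain l c where w: "w = (l, c)"
    by (cases w)
  obtain us where us: "alternating us" "word_prod ws \<otimes> word_prod vs = word_prod us"
    using Cons.IH Cons.prems w by auto
  obtain us' where us': "alternating us'" "l \<otimes> word_prod us = word_prod us'"
    using alternating_mult_letter[of l c us] us(1) Cons.prems w by auto
  have "word_prod (w # ws) \<otimes> word_prod vs = l \<otimes> (word_prod ws \<otimes> word_prod vs)"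
    using Cons.prems(2,3) w by (auto simp: factor_carrier word_prod_closed m_assoc)
  then show ?case
    using Cons.prems(1) us us' by simp
qed

lemma alternating_word_exists:
  assumes "g \<in> carrier G"
  obtains ws where "alternating ws" "g = word_prod ws"
proof -
  have "g \<in> generate G (A1 \<union> A2)"
    using assms generate_A1_A2 by simp
  then have "\<exists>ws. alternating ws \<and> g = word_prod ws"
  proof (induction rule: generate.induct)
    case one
    show ?case
      using alternating_Nil word_prod_Nil by metis
  next
    case (incl h)
    then obtain c where "h \<in> factor c"
      unfolding factor_def by (metis Un_iff)
    then show ?case
      using alternating_mult_letter[of h c "[]"] factor_carrier by (metis alternating_Nil word_prod_Nil r_one)
  next
    case (inv h)
    then obtain c where "inv h \<in> factor c"
      unfolding factor_def by (metis Un_iff subgroup.m_inv_closed subgroup_A1 subgroup_A2)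
    then show ?case
      using alternating_mult_letter[of "inv h" c "[]"] factor_carrier
      by (metis alternating_Nil word_prod_Nil r_one)
  next
    case (eng h1 h2)
    then show ?case
      using alternating_words_mult_closed by metis
  qed
  then show thesis
    using that by blast
qed

end

section \<open>Translates of two convex subtrees meeting in one point\<close>

locale tree_of_spaces = subgroup_pair G A1 A2 for G (structure) and A1 A2 +
  fixes T :: "'p set" and d :: "'p \<Rightarrow> 'p \<Rightarrow> real" and \<rho> :: "'a \<Rightarrow> 'p \<Rightarrow> 'p"
    and S1 S2 :: "'p set" and p :: 'p
  assumes R_tree: "R_tree T d"
    and action: "left_action G T \<rho>"
    and isometric_action: "\<And>g x y. g \<in> carrier G \<Longrightarrow> x \<in> T \<Longrightarrow> y \<in> T \<Longrightarrow> d (\<rho> g x) (\<rho> g y) = d x y"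
    and free_action: "\<And>g x. g \<in> carrier G \<Longrightarrow> x \<in> T \<Longrightarrow> \<rho> g x = x \<Longrightarrow> g = \<one>"
    and S1_subset: "S1 \<subseteq> T" and S2_subset: "S2 \<subseteq> T"
    and S1_convex: "\<And>u v. u \<in> S1 \<Longrightarrow> v \<in> S1 \<Longrightarrow> seg T d u v \<subseteq> S1"
    and S2_convex: "\<And>u v. u \<in> S2 \<Longrightarrow> v \<in> S2 \<Longrightarrow> seg T d u v \<subseteq> S2"
    and A1_invariant: "\<And>a s. a \<in> A1 \<Longrightarrow> s \<in> S1 \<Longrightarrow> \<rho> a s \<in> S1"
    and A2_invariant: "\<And>a s. a \<in> A2 \<Longrightarrow> s \<in> S2 \<Longrightarrow> \<rho> a s \<in> S2"
    and S1_inter_S2: "S1 \<inter> S2 = {p}"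
begin

lemma metric: "metric_on T d" and zero_hyperbolic: "zero_hyperbolic T d"
  using R_tree unfolding R_tree_def by auto

lemma act_closed: "g \<in> carrier G \<Longrightarrow> x \<in> T \<Longrightarrow> \<rho> g x \<in> T"
  and act_one: "x \<in> T \<Longrightarrow> \<rho> \<one> x = x"
  and act_mult: "g \<in> carrier G \<Longrightarrow> h \<in> carrier G \<Longrightarrow> x \<in> T \<Longrightarrow> \<rho> (g \<otimes> h) x = \<rho> g (\<rho> h x)"
  using action unfolding left_action_def by auto

lemma act_inv_cancel: "g \<in> carrier G \<Longrightarrow> x \<in> T \<Longrightarrow> \<rho> (inv g) (\<rho> g x) = x"
  using act_mult[of "inv g" g x] by (simp add: act_one)

lemma act_cancel_inv: "g \<in> carrier G \<Longrightarrow> x \<in> T \<Longrightarrow> \<rho> g (\<rho> (inv g) x) = x"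
  using act_mult[of g "inv g" x] by (simp add: act_one)

lemma act_seg:
  assumes "g \<in> carrier G" "u \<in> T" "v \<in> T" "z \<in> seg T d u v"
  shows "\<rho> g z \<in> seg T d (\<rho> g u) (\<rho> g v)"
  using assms act_closed isometric_action unfolding seg_def by auto

lemma orb_act:
  assumes "k \<in> carrier G" "x \<in> T"
  shows "orb G \<rho> (\<rho> k x) = orb G \<rho> x"
proof -
  have "\<rho> g (\<rho> k x) = \<rho> (g \<otimes> k) x" "\<rho> g x = \<rho> (g \<otimes> inv k) (\<rho> k x)" if "g \<in> carrier G" for g
    using that assms act_mult act_closed act_inv_cancel by auto
  then show ?thesis
    unfolding orb_def using assms by (blast intro: m_closed inv_closed)
qed

lemma mem_orb_self: "x \<in> T \<Longrightarrow> x \<in> orb G \<rho> x"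
  unfolding orb_def using act_one by force

definition piece :: "bool \<Rightarrow> 'p set" where
  "piece c = (if c then S1 else S2)"

lemma piece_subset: "piece c \<subseteq> T"
  using S1_subset S2_subset unfolding piece_def by simp

lemma piece_convex: "u \<in> piece c \<Longrightarrow> v \<in> piece c \<Longrightarrow> seg T d u v \<subseteq> piece c"
  using S1_convex S2_convex unfolding piece_def by (cases c) auto

lemma piece_invariant: "a \<in> factor c \<Longrightarrow> s \<in> piece c \<Longrightarrow> \<rho> a s \<in> piece c"
  using A1_invariant A2_invariant unfolding piece_def factor_def by (cases c) auto

lemma p_in_piece: "p \<in> piece c"
  using S1_inter_S2 unfolding piece_def by auto

lemma p_in_T: "p \<in> T"
  using p_in_piece piece_subset by blast

lemma piece_inter: "w \<in> piece c \<Longrightarrow> w \<in> piece (\<not> c) \<Longrightarrow> w = p"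
  using S1_inter_S2 unfolding piece_def by (cases c) auto

text \<open>\<open>h\<cdot>S\<^sub>c\<close> and \<open>h\<cdot>S\<^sub>\<not>\<^sub>c\<close> are convex and meet only in \<open>h\<cdot>p\<close>,
  so \<open>h\<cdot>p\<close> separates them.\<close>
lemma translate_p_mem_seg:
  assumes h: "h \<in> carrier G" and u: "u \<in> \<rho> h ` piece c" and v: "v \<in> \<rho> h ` piece (\<not> c)"
  shows "\<rho> h p \<in> seg T d u v"
proof -
  obtain u0 v0 where uv: "u0 \<in> piece c" "v0 \<in> piece (\<not> c)" "u = \<rho> h u0" "v = \<rho> h v0"
    using u v by blast
  have "seg T d p u0 \<inter> seg T d p v0 \<subseteq> {p}"
    using piece_convex[OF p_in_piece uv(1)] piece_convex[OF p_in_piece uv(2)] piece_inter by blast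
  then have "p \<in> seg T d u0 v0"
    using mem_seg_if_segs_meet_only_at[OF R_tree] uv piece_subset p_in_T by blast
  then show ?thesis
    using act_seg[OF h] uv piece_subset by blast
qed

text \<open>The geodesic from \<open>x\<close> to \<open>h\<cdot>p\<close> arrives through the translate \<open>h\<cdot>S\<^sub>c\<close>.\<close>
definition arrives_through :: "'p \<Rightarrow> 'a \<Rightarrow> bool \<Rightarrow> bool" where
  "arrives_through x h c \<longleftrightarrow> h \<in> carrier G \<and>
     (\<exists>q \<in> \<rho> h ` piece c. q \<noteq> \<rho> h p \<and> q \<in> seg T d x (\<rho> h p))"

lemma arrives_through_mult:
  assumes arr: "arrives_through x h c" and l: "l \<in> factor (\<not> c)" "l \<noteq> \<one>" and x: "x \<in> T"
  shows "arrives_through x (h \<otimes> l) (\<not> c)"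
proof -
  obtain q where h: "h \<in> carrier G"
    and q: "q \<in> \<rho> h ` piece c" "q \<noteq> \<rho> h p" "q \<in> seg T d x (\<rho> h p)"
    using arr unfolding arrives_through_def by blast
  have lG: "l \<in> carrier G" and hlG: "h \<otimes> l \<in> carrier G"
    using factor_carrier[OF l(1)] h by auto
  have hl_p: "\<rho> (h \<otimes> l) p = \<rho> h (\<rho> l p)"
    using act_mult[OF h lG p_in_T] .
  have "\<rho> (inv l) p \<in> piece (\<not> c)"
    using piece_invariant[OF subgroup.m_inv_closed[OF subgroup_factor l(1)] p_in_piece] .
  moreover have "\<rho> h p = \<rho> (h \<otimes> l) (\<rho> (inv l) p)"
    using act_mult[OF h lG] act_cancel_inv[OF lG p_in_T] act_closed[OF inv_closed[OF lG] p_in_T]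
    by simp
  ultimately have hp_piece: "\<rho> h p \<in> \<rho> (h \<otimes> l) ` piece (\<not> c)"
    by (rule rev_image_eqI)
  have hp_ne: "\<rho> h p \<noteq> \<rho> (h \<otimes> l) p"
  proof
    assume "\<rho> h p = \<rho> (h \<otimes> l) p"
    then have "\<rho> (inv h) (\<rho> h p) = \<rho> (inv h) (\<rho> h (\<rho> l p))"
      using hl_p by simp
    then have "p = \<rho> l p"
      using act_inv_cancel[OF h p_in_T] act_inv_cancel[OF h act_closed[OF lG p_in_T]] by simp
    then show False
      using free_action[OF lG p_in_T] l(2) by simp
  qed
  have "\<rho> (h \<otimes> l) p \<in> \<rho> h ` piece (\<not> c)"
    using hl_p piece_invariant[OF l(1) p_in_piece] by simp
  then have "\<rho> h p \<in> seg T d q (\<rho> (h \<otimes> l) p)"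
    by (rule translate_p_mem_seg[OF h q(1)])
  then have hp_seg: "\<rho> h p \<in> seg T d x (\<rho> (h \<otimes> l) p)"
    by (rule mem_seg_concat[OF metric zero_hyperbolic x act_closed[OF hlG p_in_T] q(3) _ q(2)])
  show ?thesis
    unfolding arrives_through_def using hlG hp_piece hp_ne hp_seg by blast
qed

lemma arrives_through_word_prod:
  assumes "x \<in> T"
  shows "arrives_through x h c \<Longrightarrow> alternating ws \<Longrightarrow> ws \<noteq> [] \<Longrightarrow> snd (hd ws) \<noteq> c \<Longrightarrow>
    arrives_through x (h \<otimes> word_prod ws) (snd (last ws))"
proof (induction ws arbitrary: h c)
  case Nil
  then show ?case
    by simp
next
  case (Cons w ws)
  obtain l where w: "w = (l, \<not> c)"
    using Cons.prems(4) by (cases w) auto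
  have l: "l \<in> factor (\<not> c)" "l \<noteq> \<one>" and ws: "alternating ws"
    using Cons.prems(2) w by auto
  have arr: "arrives_through x (h \<otimes> l) (\<not> c)"
    using arrives_through_mult[OF Cons.prems(1) l assms] .
  have h: "h \<in> carrier G"
    using Cons.prems(1) unfolding arrives_through_def by blast
  have prod: "h \<otimes> word_prod (w # ws) = (h \<otimes> l) \<otimes> word_prod ws"
    using w h factor_carrier[OF l(1)] word_prod_closed[OF ws] by (simp add: m_assoc)
  show ?case
  proof (cases "ws = []")
    case True
    then show ?thesis
      using arr prod w h factor_carrier[OF l(1)] by simp
  next
    case False
    then show ?thesis
      using Cons.IH[OF arr ws] Cons.prems(2) prod w by simp
  qed
qed

lemma not_arrives_through_opposite:
  assumes "arrives_through x g c" "x \<in> \<rho> g ` piece (\<not> c)"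
  shows False
proof -
  obtain q where g: "g \<in> carrier G"
    and q: "q \<in> \<rho> g ` piece c" "q \<noteq> \<rho> g p" "q \<in> seg T d x (\<rho> g p)"
    using assms(1) unfolding arrives_through_def by blast
  have x: "x \<in> T"
    using assms(2) g(1) act_closed piece_subset by blast
  have "\<rho> g p \<in> seg T d q x"
    using translate_p_mem_seg[OF g(1) q(1) assms(2)] .
  then have "\<rho> g p \<in> seg T d x x"
    using mem_seg_concat[OF metric zero_hyperbolic x x q(3)] q(2) by blast
  then have "x = \<rho> g p"
    using seg_same_endpoints[OF metric x] by simp
  then show False
    using seg_same_endpoints[OF metric x] q(2,3) by simp
qed

lemma S1_disjoint_translate_S2:
  assumes ws: "alternating ws" "ws \<noteq> []" "\<not> snd (hd ws)" "snd (last ws)"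
    and x: "x \<in> S1" "x \<noteq> p"
  shows "x \<notin> \<rho> (word_prod ws) ` S2"
proof
  assume "x \<in> \<rho> (word_prod ws) ` S2"
  then have x_translate: "x \<in> \<rho> (word_prod ws) ` piece (\<not> True)"
    unfolding piece_def by simp
  have xT: "x \<in> T"
    using x(1) S1_subset by blast
  have "x \<in> \<rho> \<one> ` piece True"
    using x(1) act_one[OF xT] unfolding piece_def by force
  then have "arrives_through x \<one> True"
    unfolding arrives_through_def
    using x(2) left_endpoint_mem_seg[OF metric xT p_in_T] act_one[OF p_in_T] by auto
  then have "arrives_through x (word_prod ws) True"
    using arrives_through_word_prod[OF xT _ ws(1,2)] ws(3,4) word_prod_closed[OF ws(1)] by fastforce
  then show False
    using not_arrives_through_opposite x_translate by blast
qed

lemma translate_reaches_p: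
  "alternating ws \<Longrightarrow> x \<in> S1 \<Longrightarrow> y \<in> S2 \<Longrightarrow> x = \<rho> (word_prod ws) y \<Longrightarrow>
    \<exists>k\<in>carrier G. x = \<rho> k p"
proof (induction ws arbitrary: x y rule: measure_induct_rule[where f = length])
  case (less ws x y)
  have xT: "x \<in> T" and yT: "y \<in> T"
    using less.prems(2,3) S1_subset S2_subset by auto
  have "\<rho> \<one> p = p"
    using act_one[OF p_in_T] .
  then have p_reached: "x = p \<Longrightarrow> \<exists>k\<in>carrier G. x = \<rho> k p"
    using one_closed by metis
  consider (empty) "ws = []"
    | (left) l ws' where "ws = (l, True) # ws'"
    | (right) l ws' where "ws = ws' @ [(l, False)]"
    | (cross) "ws \<noteq> []" "\<not> snd (hd ws)" "snd (last ws)"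
    by (metis list.collapse prod.collapse append_butlast_last_id)
  then show ?case
  proof cases
    case empty
    then have "x \<in> S1 \<inter> S2"
      using less.prems act_one[OF yT] by simp
    then show ?thesis
      using S1_inter_S2 p_reached by blast
  next
    case (left l ws')
    have l_factor: "l \<in> factor True" and ws': "alternating ws'"
      using less.prems(1) left by auto
    then have l: "l \<in> A1" "l \<in> carrier G"
      using factor_carrier[OF l_factor] by (auto simp: factor_def)
    have "\<rho> (inv l) x = \<rho> (word_prod ws') y"
      using less.prems(4) left act_mult[OF l(2) word_prod_closed[OF ws'] yT]
        act_inv_cancel[OF l(2) act_closed[OF word_prod_closed[OF ws'] yT]] by simp
    moreover have "\<rho> (inv l) x \<in> S1"
      using A1_invariant[OF subgroup.m_inv_closed[OF subgroup_A1 l(1)] less.prems(2)] .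
    ultimately obtain k where k: "k \<in> carrier G" "\<rho> (inv l) x = \<rho> k p"
      using less.IH[of ws'] left ws' less.prems(3) by auto
    then have "x = \<rho> (l \<otimes> k) p"
      using act_mult[OF l(2) k(1) p_in_T] act_cancel_inv[OF l(2) xT] by metis
    then show ?thesis
      using l(2) k(1) by blast
  next
    case (right l ws')
    have l_factor: "l \<in> factor False" and ws': "alternating ws'"
      using less.prems(1) right by auto
    then have l: "l \<in> A2" "l \<in> carrier G"
      using factor_carrier[OF l_factor] by (auto simp: factor_def)
    have "x = \<rho> (word_prod ws') (\<rho> l y)"
      using less.prems(1,4) right word_prod_snoc act_mult[OF word_prod_closed[OF ws'] l(2) yT]
      by simp
    then show ?thesis
      using less.IH[of ws'] right ws' less.prems(2) A2_invariant[OF l(1) less.prems(3)] by simp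
  next
    case cross
    show ?thesis
    proof (cases "x = p")
      case True
      then show ?thesis
        using p_reached by blast
    next
      case False
      then show ?thesis
        using S1_disjoint_translate_S2[OF less.prems(1) cross less.prems(2) False] less.prems(3,4)
        by blast
    qed
  qed
qed

lemma orb_eq_orb_p_if_meets_both:
  assumes x: "x \<in> S1" and y: "y \<in> S2" and orb_eq: "orb G \<rho> x = orb G \<rho> y"
  shows "orb G \<rho> x = orb G \<rho> p"
proof -
  have "x \<in> orb G \<rho> y"
    using mem_orb_self x S1_subset orb_eq by blast
  then obtain g where g: "g \<in> carrier G" "x = \<rho> g y"
    unfolding orb_def by blast
  obtain ws where "alternating ws" "g = word_prod ws"
    using alternating_word_exists[OF g(1)] .
  then obtain k where "k \<in> carrier G" "x = \<rho> k p"
    using translate_reaches_p x y g(2) by blast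
  then show ?thesis
    using orb_act p_in_T by simp
qed

end

section \<open>Lifts of the marked graphs \<open>X\<^sub>1\<close> and \<open>X\<^sub>2\<close>\<close>

lemma marked_metric_graph_R_tree: "marked_metric_graph K T d V \<rho> \<Longrightarrow> R_tree T d"
  unfolding marked_metric_graph_def simplicial_tree_def by blast

lemma marked_metric_graph_action: "marked_metric_graph K T d V \<rho> \<Longrightarrow> left_action K T \<rho>"
  unfolding marked_metric_graph_def by blast

lemma realises_action: "realises K T d \<rho> H \<Psi> \<sigma> \<Longrightarrow> left_action H (orb K \<rho> ` T) \<sigma>"
  unfolding realises_def by blast

lemma subgroup_pair_if_internal_free_product:
  "internal_free_product G A1 A2 \<Longrightarrow> subgroup_pair G A1 A2"
  unfolding internal_free_product_def subgroup_pair_def subgroup_pair_axioms_def by blast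

lemma image_invariant_if_equivariant:
  assumes "left_action K T' \<rho>'" and "\<forall>a\<in>carrier K. \<forall>y\<in>T'. f (\<rho>' a y) = \<rho> a (f y)"
    and a: "a \<in> carrier K" and "s \<in> f ` T'"
  shows "\<rho> a s \<in> f ` T'"
proof -
  obtain y where y: "y \<in> T'" "s = f y"
    using assms(4) by blast
  have "\<rho>' a y \<in> T'"
    using assms(1) a y(1) unfolding left_action_def by blast
  moreover have "\<rho> a s = f (\<rho>' a y)"
    using assms(2) a y by simp
  ultimately show ?thesis
    by (rule rev_image_eqI)
qed

lemma tree_of_spaces_if_lifts:
  assumes G: "subgroup_pair G A1 A2" and X: "marked_metric_graph G T d V \<rho>"
    and X1: "marked_metric_graph (G\<lparr>carrier := A1\<rparr>) T1 d1 V1 \<rho>1"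
    and X2: "marked_metric_graph (G\<lparr>carrier := A2\<rparr>) T2 d2 V2 \<rho>2"
    and lift1: "isometric_embedding T1 d1 T d lift1" "\<forall>a\<in>A1. \<forall>y\<in>T1. lift1 (\<rho>1 a y) = \<rho> a (lift1 y)"
    and lift2: "isometric_embedding T2 d2 T d lift2" "\<forall>a\<in>A2. \<forall>y\<in>T2. lift2 (\<rho>2 a y) = \<rho> a (lift2 y)"
    and single: "lift1 ` T1 \<inter> lift2 ` T2 = {p}"
  shows "tree_of_spaces G A1 A2 T d \<rho> (lift1 ` T1) (lift2 ` T2) p"
proof -
  have R_trees: "R_tree T d" "R_tree T1 d1" "R_tree T2 d2"
    using X X1 X2 by (simp_all add: marked_metric_graph_R_tree)
  show ?thesis
  proof (rule tree_of_spaces.intro[OF G], rule tree_of_spaces_axioms.intro)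
    show "left_action G T \<rho>"
      using X by (rule marked_metric_graph_action)
    show "\<And>u v. u \<in> lift1 ` T1 \<Longrightarrow> v \<in> lift1 ` T1 \<Longrightarrow> seg T d u v \<subseteq> lift1 ` T1"
      and "\<And>u v. u \<in> lift2 ` T2 \<Longrightarrow> v \<in> lift2 ` T2 \<Longrightarrow> seg T d u v \<subseteq> lift2 ` T2"
      using isometric_image_seg_subset[OF _ _ _ lift1(1)] isometric_image_seg_subset[OF _ _ _ lift2(1)]
        R_trees unfolding R_tree_def by simp_all
    show "\<And>a s. a \<in> A1 \<Longrightarrow> s \<in> lift1 ` T1 \<Longrightarrow> \<rho> a s \<in> lift1 ` T1"
      and "\<And>a s. a \<in> A2 \<Longrightarrow> s \<in> lift2 ` T2 \<Longrightarrow> \<rho> a s \<in> lift2 ` T2"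
      using image_invariant_if_equivariant[OF marked_metric_graph_action[OF X1]]
        image_invariant_if_equivariant[OF marked_metric_graph_action[OF X2]] lift1(2) lift2(2)
      by simp_all
    show "lift1 ` T1 \<subseteq> T" "lift2 ` T2 \<subseteq> T"
      using lift1(1) lift2(1) unfolding isometric_embedding_def by simp_all
    show "\<And>g x y. g \<in> carrier G \<Longrightarrow> x \<in> T \<Longrightarrow> y \<in> T \<Longrightarrow> d (\<rho> g x) (\<rho> g y) = d x y"
      and "\<And>g x. g \<in> carrier G \<Longrightarrow> x \<in> T \<Longrightarrow> \<rho> g x = x \<Longrightarrow> g = \<one>\<^bsub>G\<^esub>"
      using X unfolding marked_metric_graph_def by blast+
  qed (use R_trees single in auto)
qed

lemma orbit_image_of_lift:
  assumes "left_action H (orb K \<rho>' ` T') \<sigma>'" and h: "h \<in> carrier H" and y: "y \<in> T'"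
    and lift: "\<forall>y\<in>T'. \<iota> (orb K \<rho>' y) = orb G \<rho> (f y)"
    and equivariant: "\<forall>h\<in>carrier H. \<forall>P\<in>orb K \<rho>' ` T'. \<iota> (\<sigma>' h P) = \<sigma> h (\<iota> P)"
  obtains y' where "y' \<in> T'" "\<sigma> h (orb G \<rho> (f y)) = orb G \<rho> (f y')"
proof -
  have orbit: "orb K \<rho>' y \<in> orb K \<rho>' ` T'"
    using y by (rule imageI)
  then have "\<sigma>' h (orb K \<rho>' y) \<in> orb K \<rho>' ` T'"
    using assms(1) h unfolding left_action_def by auto
  then obtain y' where y': "y' \<in> T'" "\<sigma>' h (orb K \<rho>' y) = orb K \<rho>' y'"
    by blast
  have "\<sigma> h (orb G \<rho> (f y)) = \<sigma> h (\<iota> (orb K \<rho>' y))"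
    using lift y by simp
  also have "\<dots> = \<iota> (\<sigma>' h (orb K \<rho>' y))"
    using equivariant h y by simp
  also have "\<dots> = orb G \<rho> (f y')"
    using y' lift by simp
  finally show thesis
    using that y'(1) by blast
qed

theorem lemma3p4:
  fixes G :: "'g monoid" and n :: nat and A1 A2 :: "'g set"
    and H :: "'h monoid" and \<phi> :: "'h \<Rightarrow> ('g \<Rightarrow> 'g) set"
    and T :: "'p set" and d :: "'p \<Rightarrow> 'p \<Rightarrow> real" and V :: "'p set"
    and \<rho> :: "'g \<Rightarrow> 'p \<Rightarrow> 'p" and \<sigma> :: "'h \<Rightarrow> 'p set \<Rightarrow> 'p set"
    and T1 :: "'q1 set" and d1 :: "'q1 \<Rightarrow> 'q1 \<Rightarrow> real" and V1 :: "'q1 set"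
    and \<rho>1 :: "'g \<Rightarrow> 'q1 \<Rightarrow> 'q1" and \<sigma>1 :: "'h \<Rightarrow> 'q1 set \<Rightarrow> 'q1 set"
    and T2 :: "'q2 set" and d2 :: "'q2 \<Rightarrow> 'q2 \<Rightarrow> real" and V2 :: "'q2 set"
    and \<rho>2 :: "'g \<Rightarrow> 'q2 \<Rightarrow> 'q2" and \<sigma>2 :: "'h \<Rightarrow> 'q2 set \<Rightarrow> 'q2 set"
    and lift1 :: "'q1 \<Rightarrow> 'p" and lift2 :: "'q2 \<Rightarrow> 'p"
    and \<iota>1 :: "'q1 set \<Rightarrow> 'p set" and \<iota>2 :: "'q2 set \<Rightarrow> 'p set"
    and p :: 'p
  assumes Fn: "group G" "free_of_rank G n"
    and free_prod: "internal_free_product G A1 A2"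
    and nontriv: "A1 \<noteq> {\<one>\<^bsub>G\<^esub>}" "A2 \<noteq> {\<one>\<^bsub>G\<^esub>}"
    and H: "group H" "finite (carrier H)"
    and phi_hom: "\<phi> \<in> hom H (Out_group G)"
    and pres1: "\<forall>h\<in>carrier H. \<forall>\<alpha>\<in>\<phi> h. \<exists>c\<in>carrier G.
                  \<alpha> ` A1 = (\<lambda>a. c \<otimes>\<^bsub>G\<^esub> a \<otimes>\<^bsub>G\<^esub> inv\<^bsub>G\<^esub> c) ` A1"
    and pres2: "\<forall>h\<in>carrier H. \<forall>\<alpha>\<in>\<phi> h. \<exists>c\<in>carrier G.
                  \<alpha> ` A2 = (\<lambda>a. c \<otimes>\<^bsub>G\<^esub> a \<otimes>\<^bsub>G\<^esub> inv\<^bsub>G\<^esub> c) ` A2"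
    and X_graph: "marked_metric_graph G T d V \<rho>"
    and X_real: "realises G T d \<rho> H \<phi> \<sigma>"
    and X_comb: "\<forall>h\<in>carrier H. \<sigma> h ` (orb G \<rho> ` V) \<subseteq> orb G \<rho> ` V"
    and X1_graph: "marked_metric_graph (G\<lparr>carrier := A1\<rparr>) T1 d1 V1 \<rho>1"
    and X1_real: "realises (G\<lparr>carrier := A1\<rparr>) T1 d1 \<rho>1 H (induced_out G A1 \<phi>) \<sigma>1"
    and X2_graph: "marked_metric_graph (G\<lparr>carrier := A2\<rparr>) T2 d2 V2 \<rho>2"
    and X2_real: "realises (G\<lparr>carrier := A2\<rparr>) T2 d2 \<rho>2 H (induced_out G A2 \<phi>) \<sigma>2"
    and lift1_isom: "isometric_embedding T1 d1 T d lift1"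
    and lift1_equiv: "\<forall>a\<in>A1. \<forall>y\<in>T1. lift1 (\<rho>1 a y) = \<rho> a (lift1 y)"
    and lift2_isom: "isometric_embedding T2 d2 T d lift2"
    and lift2_equiv: "\<forall>a\<in>A2. \<forall>y\<in>T2. lift2 (\<rho>2 a y) = \<rho> a (lift2 y)"
    and \<iota>1_lift: "\<forall>y\<in>T1. \<iota>1 (orb (G\<lparr>carrier := A1\<rparr>) \<rho>1 y) = orb G \<rho> (lift1 y)"
    and \<iota>2_lift: "\<forall>y\<in>T2. \<iota>2 (orb (G\<lparr>carrier := A2\<rparr>) \<rho>2 y) = orb G \<rho> (lift2 y)"
    and \<iota>1_emb: "inj_on \<iota>1 (orb (G\<lparr>carrier := A1\<rparr>) \<rho>1 ` T1)" "\<forall>P\<in>(orb (G\<lparr>carrier := A1\<rparr>) \<rho>1 ` T1). \<forall>Q\<in>(orb (G\<lparr>carrier := A1\<rparr>) \<rho>1 ` T1). qdist d (\<iota>1 P) (\<iota>1 Q) = qdist d1 P Q"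
    and \<iota>2_emb: "inj_on \<iota>2 (orb (G\<lparr>carrier := A2\<rparr>) \<rho>2 ` T2)" "\<forall>P\<in>(orb (G\<lparr>carrier := A2\<rparr>) \<rho>2 ` T2). \<forall>Q\<in>(orb (G\<lparr>carrier := A2\<rparr>) \<rho>2 ` T2). qdist d (\<iota>2 P) (\<iota>2 Q) = qdist d2 P Q"
    and \<iota>1_H: "\<forall>h\<in>carrier H. \<forall>P\<in>(orb (G\<lparr>carrier := A1\<rparr>) \<rho>1 ` T1). \<iota>1 (\<sigma>1 h P) = \<sigma> h (\<iota>1 P)"
    and \<iota>2_H: "\<forall>h\<in>carrier H. \<forall>P\<in>(orb (G\<lparr>carrier := A2\<rparr>) \<rho>2 ` T2). \<iota>2 (\<sigma>2 h P) = \<sigma> h (\<iota>2 P)"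
    and cover: "orb G \<rho> ` T = \<iota>1 ` (orb (G\<lparr>carrier := A1\<rparr>) \<rho>1 ` T1) \<union> \<iota>2 ` (orb (G\<lparr>carrier := A2\<rparr>) \<rho>2 ` T2)"
    and single: "lift1 ` T1 \<inter> lift2 ` T2 = {p}"
  shows "\<forall>h\<in>carrier H. \<sigma> h (orb G \<rho> p) = orb G \<rho> p"
proof
  fix h assume h: "h \<in> carrier H"
  interpret tree_of_spaces G A1 A2 T d \<rho> "lift1 ` T1" "lift2 ` T2" p
    using tree_of_spaces_if_lifts[OF subgroup_pair_if_internal_free_product[OF free_prod]
        X_graph X1_graph X2_graph lift1_isom lift1_equiv lift2_isom lift2_equiv single] .
  obtain y1 y2 where y: "y1 \<in> T1" "y2 \<in> T2" "p = lift1 y1" "p = lift2 y2"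
    using single by blast
  obtain y1' where y1': "y1' \<in> T1" "\<sigma> h (orb G \<rho> (lift1 y1)) = orb G \<rho> (lift1 y1')"
    by (rule orbit_image_of_lift[OF realises_action[OF X1_real] h y(1) \<iota>1_lift \<iota>1_H])
  obtain y2' where y2': "y2' \<in> T2" "\<sigma> h (orb G \<rho> (lift2 y2)) = orb G \<rho> (lift2 y2')"
    by (rule orbit_image_of_lift[OF realises_action[OF X2_real] h y(2) \<iota>2_lift \<iota>2_H])
  have "orb G \<rho> (lift1 y1') = orb G \<rho> (lift2 y2')"
    using y(3,4) y1'(2) y2'(2) by simp
  then have "orb G \<rho> (lift1 y1') = orb G \<rho> p"
    using orb_eq_orb_p_if_meets_both y1'(1) y2'(1) by blast
  then show "\<sigma> h (orb G \<rho> p) = orb G \<rho> p"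
    using y(3) y1'(2) by simp
qed

end
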